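(* Let $\Omega\subset\mathbb{R}^N$ be an open bounded set, $q\in L^\infty(\Omega;\mathbb{R}^N)$ and $s\in(0,1)$. Let $u\in\mathcal{L}^1_s(\mathbb{R}^N)\cap\mathcal{C}^2(\Omega)\cap\mathcal{C}(\mathbb{R}^N)$ satisfy $$-\Delta u+(-\Delta)^s u+q\cdot\nabla u\ge0\ \text{ in }\Omega,\qquad u\ge0\ \text{ on }\mathbb{R}^N\setminus\Omega.$$ Then either $u>0$ in $\Omega$ or $u\equiv0$ in $\mathbb{R}^N$.
   Context: The fractional Laplacian is $(-\Delta)^s u(x)=C_{N,s}\lim_{\varepsilon\to0^+}\int_{\mathbb{R}^N\setminus B_\varepsilon(x)}\frac{u(x)-u(y)}{|x-y|^{N+2s}}\,dy$, with $C_{N,s}=\pi^{-N/2}2^{2s}s\,\Gamma(\frac N2+s)/\Gamma(1-s)$. $\mathcal{L}^1_s(\mathbb{R}^N)$ is the space of measurable $u:\mathbb{R}^N\to\mathbb{R}$ with $\int_{\mathbb{R}^N}\frac{|u(y)|}{1+|y|^{N+2s}}\,dy<\infty$. *)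

theory Defs
  imports "HOL-Analysis.Analysis"
begin

definition frac_const :: "nat \<Rightarrow> real \<Rightarrow> real" where
  "frac_const N s = pi powr (- real N / 2) * 2 powr (2 * s) * s
                    * Gamma (real N / 2 + s) / Gamma (1 - s)"

definition frac_lap :: "real \<Rightarrow> ('a::euclidean_space \<Rightarrow> real) \<Rightarrow> 'a \<Rightarrow> real" where
  "frac_lap s u x = frac_const DIM('a) s *
     Lim (at_right 0) (\<lambda>\<epsilon>. (\<integral>y \<in> - ball x \<epsilon>.
            (u x - u y) / norm (x - y) powr (real DIM('a) + 2 * s) \<partial>lebesgue))"

definition L1s :: "real \<Rightarrow> ('a::euclidean_space \<Rightarrow> real) set" where
  "L1s s = {u. u \<in> borel_measurable lebesgue \<and>
      integrable lebesgue (\<lambda>y. \<bar>u y\<bar> / (1 + norm y powr (real DIM('a) + 2 * s)))}"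

definition C2_on :: "'a set \<Rightarrow> ('a::euclidean_space \<Rightarrow> real) \<Rightarrow> bool" where
  "C2_on S u \<longleftrightarrow> (\<exists>G :: 'a \<Rightarrow> 'a. \<exists>H :: 'a \<Rightarrow> ('a \<Rightarrow>\<^sub>L 'a).
     (\<forall>x\<in>S. (u has_derivative (\<lambda>h. G x \<bullet> h)) (at x)) \<and>
     (\<forall>x\<in>S. (G has_derivative blinfun_apply (H x)) (at x)) \<and>
     continuous_on S H)"

definition grad :: "('a::euclidean_space \<Rightarrow> real) \<Rightarrow> 'a \<Rightarrow> 'a" where
  "grad u x = (\<Sum>b\<in>Basis. frechet_derivative u (at x) b *\<^sub>R b)"

definition laplacian :: "('a::euclidean_space \<Rightarrow> real) \<Rightarrow> 'a \<Rightarrow> real" where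
  "laplacian u x = (\<Sum>b\<in>Basis. frechet_derivative (grad u) (at x) b \<bullet> b)"

end

theory Submission
  imports Defs
begin

text \<open>
  Suppose the conclusion fails. Since \<open>u \<ge> 0\<close> off the bounded set \<open>\<Omega>\<close> and \<open>u \<le> 0\<close> somewhere
  in \<open>\<Omega>\<close>, the continuous function \<open>u\<close> attains a global minimum \<open>u x\<^sub>0 \<le> 0\<close> at some
  \<open>x\<^sub>0 \<in> \<Omega>\<close>, and \<open>u\<close> is not constant. At \<open>x\<^sub>0\<close> the gradient vanishes (so the drift term
  \<open>q \<bullet> \<nabla>u\<close> drops out and no hypothesis on \<open>q\<close> is needed) and the Hessian is positive
  semidefinite, so \<open>-\<Delta>u(x\<^sub>0) \<le> 0\<close>. The kernel \<open>(u x\<^sub>0 - u y) / |x\<^sub>0 - y|\<^bsup>N+2s\<^esup>\<close> is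
  \<open>\<le> 0\<close>, integrable (near \<open>x\<^sub>0\<close> because \<open>u - u x\<^sub>0 = O(|y - x\<^sub>0|\<^sup>2)\<close>, far away because
  \<open>u \<in> L\<^sup>1\<^sub>s\<close>), and strictly negative on the nonempty open set \<open>{u > u x\<^sub>0}\<close>; hence the
  principal value equals its Lebesgue integral and \<open>(-\<Delta>)\<^sup>s u(x\<^sub>0) < 0\<close>, contradicting the
  inequality at \<open>x\<^sub>0\<close>.
\<close>

subsection \<open>Integrability of powers of the distance\<close>

lemma ex_dyadic_bracket:
  fixes a b :: real
  assumes "0 < a" "a \<le> b"
  shows "\<exists>k. a * 2 ^ k \<le> b \<and> b \<le> a * 2 ^ Suc k"
proof -
  define k where "k = nat \<lfloor>log 2 (b / a)\<rfloor>"
  have l: "0 \<le> log 2 (b / a)" using assms by simp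
  have "real k \<le> log 2 (b / a)" "log 2 (b / a) < real k + 1"
    using l unfolding k_def by linarith+
  then have "2 powr real k \<le> b / a" "b / a < 2 powr (real k + 1)"
    using assms by (auto simp: le_log_iff log_less_iff)
  then show ?thesis
    using assms by (intro exI[of _ k]) (auto simp: powr_realpow field_simps powr_add)
qed

lemma nn_integral_annulus_norm_powr_le:
  fixes c :: "'a::euclidean_space" and a :: real
  assumes "0 < \<rho>"
  shows "(\<integral>\<^sup>+y. indicator (cball c (2 * \<rho>) - ball c \<rho>) y * ennreal (norm (y - c) powr (-a)) \<partial>lebesgue)
    \<le> ennreal ((1 + 2 powr (-a)) * 4 ^ DIM('a) * measure lebesgue (ball (0::'a) 1) * \<rho> powr (DIM('a) - a))"
proof -
  have bound: "norm (y - c) powr (-a) \<le> (1 + 2 powr (-a)) * \<rho> powr (-a)"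
    if "\<rho> \<le> norm (y - c)" "norm (y - c) \<le> 2 * \<rho>" for y
  proof -
    have "norm (y - c) powr (-a) \<le> \<rho> powr (-a) + (2 * \<rho>) powr (-a)"
    proof (cases "a \<le> 0")
      case True
      then have "norm (y - c) powr (-a) \<le> (2 * \<rho>) powr (-a)" using that assms by (intro powr_mono2) auto
      then show ?thesis by (smt (verit) powr_ge_zero)
    next
      case False
      then have "norm (y - c) powr (-a) \<le> \<rho> powr (-a)" using that assms by (intro powr_mono2') auto
      then show ?thesis by (smt (verit) powr_ge_zero)
    qed
    then show ?thesis using assms by (simp add: powr_mult algebra_simps)
  qed
  have "(\<integral>\<^sup>+y. indicator (cball c (2 * \<rho>) - ball c \<rho>) y * ennreal (norm (y - c) powr (-a)) \<partial>lebesgue)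
      \<le> (\<integral>\<^sup>+y. ennreal ((1 + 2 powr (-a)) * \<rho> powr (-a)) * indicator (ball c (4 * \<rho>)) y \<partial>lebesgue)"
    using assms by (intro nn_integral_mono)
      (auto simp: indicator_def dist_norm norm_minus_commute not_less intro!: ennreal_leI bound)
  also have "\<dots> = ennreal ((1 + 2 powr (-a)) * \<rho> powr (-a)) * emeasure lebesgue (ball c (4 * \<rho>))"
    by (rule nn_integral_cmult_indicator) auto
  also have "\<dots> = ennreal ((1 + 2 powr (-a)) * \<rho> powr (-a))
      * (ennreal ((4 * \<rho>) ^ DIM('a)) * ennreal (measure lebesgue (ball (0::'a) 1)))"
  proof -
    have "emeasure lebesgue (ball c (4 * \<rho>)) = ennreal ((4 * \<rho>) ^ DIM('a)) * emeasure lebesgue (ball (0::'a) 1)"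
      using assms by (intro emeasure_lebesgue_ball_conv_unit_ball) simp
    then show ?thesis by (simp only: emeasure_eq_measure2[OF lmeasurable_ball[of "0::'a" 1]])
  qed
  also have "\<dots> = ennreal ((1 + 2 powr (-a)) * \<rho> powr (-a) * ((4 * \<rho>) ^ DIM('a) * measure lebesgue (ball (0::'a) 1)))"
    using assms by (simp add: ennreal_mult)
  also have "(1 + 2 powr (-a)) * \<rho> powr (-a) * ((4 * \<rho>) ^ DIM('a) * measure lebesgue (ball (0::'a) 1))
      = (1 + 2 powr (-a)) * 4 ^ DIM('a) * measure lebesgue (ball (0::'a) 1) * \<rho> powr (DIM('a) - a)"
    using assms by (simp add: power_mult_distrib powr_realpow[symmetric] powr_diff powr_minus field_simps)
  finally show ?thesis .
qed

lemma nn_integral_less_top_geometric: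
  fixes f :: "'b \<Rightarrow> ennreal"
  assumes "\<And>y. f y \<le> (\<Sum>k. g k y)" "\<And>k. g k \<in> borel_measurable M"
    and "\<And>k. (\<integral>\<^sup>+y. g k y \<partial>M) \<le> ennreal (B * q ^ k)" "0 \<le> B" "0 \<le> q" "q < 1"
  shows "(\<integral>\<^sup>+y. f y \<partial>M) < \<infinity>"
proof -
  have "(\<integral>\<^sup>+y. f y \<partial>M) \<le> (\<integral>\<^sup>+y. (\<Sum>k. g k y) \<partial>M)"
    by (intro nn_integral_mono assms(1))
  also have "\<dots> = (\<Sum>k. \<integral>\<^sup>+y. g k y \<partial>M)"
    using assms(2) by (rule nn_integral_suminf)
  also have "\<dots> \<le> (\<Sum>k. ennreal (B * q ^ k))"
    by (intro suminf_le summableI assms(3))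
  also have "\<dots> = ennreal (\<Sum>k. B * q ^ k)"
    using assms(4-6) by (intro suminf_ennreal2) (auto intro!: summable_mult summable_geometric)
  finally show ?thesis
    by (metis ennreal_less_top infinity_ennreal_def order.strict_trans1)
qed

lemma integrable_norm_powr_annuli:
  fixes c :: "'a::euclidean_space" and a :: real
  assumes A: "A \<in> sets borel" and "0 < \<rho>" "0 < t" "t powr (DIM('a) - a) < 1"
    and cover: "\<And>y. y \<in> A \<Longrightarrow> y \<noteq> c \<Longrightarrow> \<exists>k. y \<in> cball c (2 * (\<rho> * t ^ k)) - ball c (\<rho> * t ^ k)"
  shows "integrable lebesgue (\<lambda>y. indicator A y * norm (y - c) powr (-a))"
proof (rule integrableI_nonneg)
  define S where "S k = cball c (2 * (\<rho> * t ^ k)) - ball c (\<rho> * t ^ k)" for k :: nat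
  define f where "f k y = indicator (S k) y * ennreal (norm (y - c) powr (-a))" for k y
  define C where "C = (1 + 2 powr (-a)) * 4 ^ DIM('a) * measure lebesgue (ball (0::'a) 1)"
  define e where "e = real DIM('a) - a"
  have [measurable]: "A \<in> sets borel" "S k \<in> sets borel" for k
    using A unfolding S_def by auto
  show "(\<lambda>y. indicator A y * norm (y - c) powr (-a)) \<in> borel_measurable lebesgue"
    by (intro measurable_completion) measurable
  show "AE y in lebesgue. 0 \<le> indicator A y * norm (y - c) powr (-a)"
    by simp
  show "(\<integral>\<^sup>+y. ennreal (indicator A y * norm (y - c) powr (-a)) \<partial>lebesgue) < \<infinity>"
  proof (rule nn_integral_less_top_geometric)
    show "ennreal (indicator A y * norm (y - c) powr (-a)) \<le> (\<Sum>k. f k y)" for y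
    proof (cases "y \<in> A \<and> y \<noteq> c")
      case True
      then obtain k where "y \<in> S k" using cover unfolding S_def by blast
      then show ?thesis
        using True sum_le_suminf[OF summableI, of "{k}" "\<lambda>k. f k y"] by (simp add: f_def)
    qed (auto simp: indicator_def)
    show "f k \<in> borel_measurable lebesgue" for k
      unfolding f_def by (intro measurable_completion) measurable
    show "(\<integral>\<^sup>+y. f k y \<partial>lebesgue) \<le> ennreal (C * \<rho> powr e * (t powr e) ^ k)" for k
    proof -
      have "(\<rho> * t ^ k) powr e = \<rho> powr e * (t powr e) ^ k"
        using assms by (simp add: powr_mult powr_realpow[symmetric] powr_powr powr_power mult_ac)
      moreover have "(\<integral>\<^sup>+y. f k y \<partial>lebesgue) \<le> ennreal (C * (\<rho> * t ^ k) powr e)"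
        unfolding f_def S_def C_def e_def using assms by (intro nn_integral_annulus_norm_powr_le) simp
      ultimately show ?thesis by (simp add: mult.assoc)
    qed
    show "0 \<le> C * \<rho> powr e" "0 \<le> t powr e" "t powr e < 1"
      using assms unfolding C_def e_def by auto
  qed
qed

lemma integrable_norm_powr_ball:
  fixes c :: "'a::euclidean_space" and a :: real
  assumes "0 < r" "a < DIM('a)"
  shows "integrable lebesgue (\<lambda>y. indicator (ball c r) y * norm (y - c) powr (-a))"
proof (rule integrable_norm_powr_annuli)
  show "(1 / 2) powr (DIM('a) - a) < 1"
    using assms powr_less_mono2[of "DIM('a) - a" "1 / 2" 1] by simp
  fix y assume "y \<in> ball c r" "y \<noteq> c"
  then have "0 < norm (y - c)" "norm (y - c) \<le> r"
    by (auto simp: dist_norm norm_minus_commute)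
  then obtain k where "norm (y - c) * 2 ^ k \<le> r" "r \<le> norm (y - c) * 2 ^ Suc k"
    using ex_dyadic_bracket by blast
  then show "\<exists>k. y \<in> cball c (2 * (r / 2 * (1 / 2) ^ k)) - ball c (r / 2 * (1 / 2) ^ k)"
    by (intro exI[of _ k]) (auto simp: dist_norm norm_minus_commute field_simps)
qed (use assms in auto)

lemma integrable_norm_powr_compl_ball:
  fixes c :: "'a::euclidean_space" and a :: real
  assumes "0 < r" "DIM('a) < a"
  shows "integrable lebesgue (\<lambda>y. indicator (- ball c r) y * norm (y - c) powr (-a))"
proof (rule integrable_norm_powr_annuli)
  show "2 powr (DIM('a) - a) < 1"
    using assms by (intro powr_less_one) auto
  fix y assume "y \<in> - ball c r"
  then have "r \<le> norm (y - c)"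
    by (auto simp: dist_norm norm_minus_commute)
  then obtain k where "r * 2 ^ k \<le> norm (y - c)" "norm (y - c) \<le> r * 2 ^ Suc k"
    using ex_dyadic_bracket assms by blast
  then show "\<exists>k. y \<in> cball c (2 * (r * 2 ^ k)) - ball c (r * 2 ^ k)"
    by (intro exI[of _ k]) (auto simp: dist_norm norm_minus_commute)
qed (use assms in auto)

lemma one_plus_norm_powr_le:
  fixes x y :: "'a::real_normed_vector" and p :: real
  assumes "0 < r" "r \<le> norm (y - x)" "0 \<le> p"
  shows "1 + norm y powr p \<le> ((norm x / r + 1) powr p + r powr (-p)) * norm (y - x) powr p"
proof -
  define d where "d = norm (y - x)"
  have d: "0 < d" "r \<le> d" using assms unfolding d_def by auto
  have "norm y \<le> norm x + d"
    unfolding d_def by (metis norm_triangle_sub add.commute norm_minus_commute)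
  also have "\<dots> \<le> (norm x / r + 1) * d"
    using d assms by (simp add: field_simps mult_right_mono)
  finally have "norm y powr p \<le> (norm x / r + 1) powr p * d powr p"
    using assms d by (simp add: powr_mono2 flip: powr_mult)
  moreover have "1 \<le> r powr (-p) * d powr p"
  proof -
    have "1 \<le> (d / r) powr p" using d assms by (intro ge_one_powr_ge_zero) auto
    then show ?thesis using d assms by (simp add: powr_divide powr_minus field_simps)
  qed
  ultimately show ?thesis unfolding d_def by (simp add: algebra_simps)
qed

lemma frac_kernel_bound_near:
  fixes u :: "'a::real_normed_vector \<Rightarrow> real" and p :: real
  assumes "\<bar>u y - u x\<bar> \<le> K * norm (y - x) ^ 2" "y \<noteq> x"
  shows "\<bar>(u x - u y) / norm (x - y) powr p\<bar> \<le> \<bar>K\<bar> * norm (y - x) powr (2 - p)"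
proof -
  define d where "d = norm (y - x)"
  have "0 < d" using assms(2) unfolding d_def by simp
  have "\<bar>(u x - u y) / norm (x - y) powr p\<bar> = \<bar>u y - u x\<bar> / d powr p"
    unfolding d_def by (simp add: norm_minus_commute abs_minus_commute)
  also have "\<dots> \<le> \<bar>K\<bar> * d\<^sup>2 / d powr p"
  proof (rule divide_right_mono)
    have "\<bar>u y - u x\<bar> \<le> K * d\<^sup>2" using assms(1) unfolding d_def .
    also have "\<dots> \<le> \<bar>K\<bar> * d\<^sup>2" by (simp add: mult_right_mono)
    finally show "\<bar>u y - u x\<bar> \<le> \<bar>K\<bar> * d\<^sup>2" .
  qed simp
  also have "\<dots> = \<bar>K\<bar> * d powr (2 - p)"
    using powr_realpow[of d 2] \<open>0 < d\<close> by (simp add: powr_diff)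
  finally show ?thesis unfolding d_def .
qed

lemma frac_kernel_bound_far:
  fixes u :: "'a::real_normed_vector \<Rightarrow> real" and p :: real
  assumes "0 < r" "r \<le> norm (y - x)" "0 \<le> p"
  shows "\<bar>(u x - u y) / norm (x - y) powr p\<bar>
    \<le> \<bar>u x\<bar> * norm (y - x) powr (-p) + ((norm x / r + 1) powr p + r powr (-p)) * (\<bar>u y\<bar> / (1 + norm y powr p))"
proof -
  define d where "d = norm (y - x)"
  define K where "K = (norm x / r + 1) powr p + r powr (-p)"
  have "0 < d" using assms unfolding d_def by linarith
  have "\<bar>(u x - u y) / norm (x - y) powr p\<bar> = \<bar>u x - u y\<bar> / d powr p"
    unfolding d_def by (simp add: norm_minus_commute abs_divide)
  also have "\<dots> \<le> (\<bar>u x\<bar> + \<bar>u y\<bar>) / d powr p"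
    by (intro divide_right_mono abs_triangle_ineq4) simp
  also have "\<dots> = \<bar>u x\<bar> * d powr (-p) + \<bar>u y\<bar> / d powr p"
    by (simp add: add_divide_distrib powr_minus divide_inverse distrib_right)
  also have "\<bar>u y\<bar> / d powr p \<le> K * (\<bar>u y\<bar> / (1 + norm y powr p))"
  proof -
    have "\<bar>u y\<bar> * (1 + norm y powr p) \<le> \<bar>u y\<bar> * (K * d powr p)"
      using one_plus_norm_powr_le[OF assms] unfolding K_def d_def by (intro mult_left_mono) auto
    moreover have "0 < 1 + norm y powr p" by (simp add: add_pos_nonneg)
    ultimately show ?thesis using \<open>0 < d\<close> by (simp add: field_simps)
  qed
  finally show ?thesis unfolding d_def K_def by simp
qed

lemma integrable_frac_lap_kernel:
  fixes u :: "'a::euclidean_space \<Rightarrow> real" and s :: real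
  assumes "u \<in> L1s s" "0 < s" "s < 1" "0 < r"
    and quadratic: "\<forall>y\<in>ball x r. \<bar>u y - u x\<bar> \<le> K * norm (y - x) ^ 2"
  shows "integrable lebesgue (\<lambda>y. (u x - u y) / norm (x - y) powr (DIM('a) + 2 * s))"
proof -
  define p :: real where "p = DIM('a) + 2 * s"
  have p: "0 < p" "p - 2 < real DIM('a)" "real DIM('a) < p"
    using assms unfolding p_def by auto
  have [measurable]: "u \<in> borel_measurable lebesgue" "(\<lambda>y. y) \<in> borel_measurable (lebesgue :: 'a measure)"
    using assms(1) id_borel_measurable_lebesgue unfolding L1s_def by (simp_all add: id_def)
  define h where "h y = \<bar>K\<bar> * (indicator (ball x r) y * norm (y - x) powr (-(p - 2)))
     + \<bar>u x\<bar> * (indicator (- ball x r) y * norm (y - x) powr (-p))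
     + ((norm x / r + 1) powr p + r powr (-p)) * (\<bar>u y\<bar> / (1 + norm y powr p))" for y
  have integrable_h: "integrable lebesgue h"
    unfolding h_def using assms(1) integrable_norm_powr_ball[OF \<open>0 < r\<close> p(2)]
      integrable_norm_powr_compl_ball[OF \<open>0 < r\<close> p(3)]
    by (intro Bochner_Integration.integrable_add integrable_mult_right) (simp_all add: L1s_def p_def)
  have bound: "\<bar>(u x - u y) / norm (x - y) powr p\<bar> \<le> h y" for y
  proof -
    have nonneg: "0 \<le> \<bar>K\<bar> * (indicator (ball x r) y * norm (y - x) powr (-(p - 2)))"
      "0 \<le> \<bar>u x\<bar> * (indicator (- ball x r) y * norm (y - x) powr (-p))"
      "0 \<le> ((norm x / r + 1) powr p + r powr (-p)) * (\<bar>u y\<bar> / (1 + norm y powr p))"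
      by (auto intro!: divide_nonneg_pos add_pos_nonneg)
    consider "y = x" | "y \<in> ball x r" "y \<noteq> x" | "y \<notin> ball x r" by blast
    then show ?thesis
    proof cases
      case 2
      then have "h y = \<bar>K\<bar> * norm (y - x) powr (2 - p)
          + ((norm x / r + 1) powr p + r powr (-p)) * (\<bar>u y\<bar> / (1 + norm y powr p))"
        by (simp add: h_def)
      moreover have "\<bar>(u x - u y) / norm (x - y) powr p\<bar> \<le> \<bar>K\<bar> * norm (y - x) powr (2 - p)"
        using frac_kernel_bound_near[of u y x K p] quadratic 2 by simp
      ultimately show ?thesis using nonneg(3) by linarith
    next
      case 3
      then have "r \<le> norm (y - x)" by (simp add: dist_norm norm_minus_commute)
      moreover have "h y = \<bar>u x\<bar> * norm (y - x) powr (-p)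
          + ((norm x / r + 1) powr p + r powr (-p)) * (\<bar>u y\<bar> / (1 + norm y powr p))"
        using 3 by (simp add: h_def)
      ultimately show ?thesis
        using frac_kernel_bound_far[OF \<open>0 < r\<close> _ less_imp_le[OF p(1)], of y x u] by simp
    qed (use nonneg in \<open>simp add: h_def\<close>)
  qed
  show ?thesis
    unfolding p_def[symmetric]
  proof (rule Bochner_Integration.integrable_bound[OF integrable_h])
    show "(\<lambda>y. (u x - u y) / norm (x - y) powr p) \<in> borel_measurable lebesgue"
      by measurable
    show "AE y in lebesgue. norm ((u x - u y) / norm (x - y) powr p) \<le> norm (h y)"
      using bound by (intro AE_I2) (metis abs_ge_self order_trans real_norm_def)
  qed
qed

subsection \<open>First- and second-order conditions at a minimum\<close>

lemma has_real_derivative_along_line: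
  fixes u :: "'a::real_inner \<Rightarrow> real"
  assumes "(u has_derivative (\<lambda>h. g \<bullet> h)) (at (x + t *\<^sub>R b))"
  shows "((\<lambda>t. u (x + t *\<^sub>R b)) has_real_derivative (g \<bullet> b)) (at t)"
proof -
  have "((\<lambda>t. x + t *\<^sub>R b) has_derivative (\<lambda>t. t *\<^sub>R b)) (at t)"
    by (intro derivative_eq_intros) auto
  then have "((\<lambda>t. u (x + t *\<^sub>R b)) has_derivative (\<lambda>t. g \<bullet> (t *\<^sub>R b))) (at t)"
    using assms by (rule has_derivative_compose)
  moreover have "(\<lambda>t. g \<bullet> (t *\<^sub>R b)) = (*) (g \<bullet> b)"
    by (auto simp: mult.commute)
  ultimately show ?thesis
    unfolding has_field_derivative_def by simp
qed

lemma gradient_zero_at_min: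
  fixes u :: "'a::real_inner \<Rightarrow> real"
  assumes "open \<Omega>" "x \<in> \<Omega>" "(u has_derivative (\<lambda>h. g \<bullet> h)) (at x)"
    and "\<forall>y\<in>\<Omega>. u x \<le> u y"
  shows "g = 0"
proof -
  have "(\<lambda>h. g \<bullet> h) = (\<lambda>h. 0)"
    using assms by (intro has_derivative_local_min) (auto simp: eventually_at_topological)
  then show ?thesis by (metis inner_eq_zero_iff)
qed

lemma grad_eqI:
  fixes u :: "'a::euclidean_space \<Rightarrow> real"
  assumes "(u has_derivative (\<lambda>h. g \<bullet> h)) (at x)"
  shows "grad u x = g"
  using frechet_derivative_at[OF assms, symmetric] unfolding grad_def
  by (simp add: euclidean_representation)

lemma has_real_derivative_inner_along_line:
  fixes G :: "'a::real_inner \<Rightarrow> 'a"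
  assumes "(G has_derivative G') (at x)"
  shows "((\<lambda>t. G (x + t *\<^sub>R b) \<bullet> b) has_real_derivative (G' b \<bullet> b)) (at 0)"
proof -
  have line: "((\<lambda>t. x + t *\<^sub>R b) has_derivative (\<lambda>t. t *\<^sub>R b)) (at 0)"
    by (intro derivative_eq_intros) auto
  have "((\<lambda>t. G (x + t *\<^sub>R b)) has_derivative (\<lambda>t. G' (t *\<^sub>R b))) (at 0)"
    using has_derivative_compose[OF line, of G G'] assms by simp
  then have "((\<lambda>t. G (x + t *\<^sub>R b) \<bullet> b) has_derivative (\<lambda>t. G' (t *\<^sub>R b) \<bullet> b)) (at 0)"
    by (rule has_derivative_inner_left)
  moreover have "(\<lambda>t. G' (t *\<^sub>R b) \<bullet> b) = (*) (G' b \<bullet> b)"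
    using has_derivative_linear[OF assms] by (auto simp: linear_scale mult.commute)
  ultimately show ?thesis
    unfolding has_field_derivative_def by simp
qed

lemma hessian_nonneg_at_min:
  fixes u :: "'a::euclidean_space \<Rightarrow> real" and G :: "'a \<Rightarrow> 'a"
  assumes "open \<Omega>" "x0 \<in> \<Omega>"
    and du: "\<forall>x\<in>\<Omega>. (u has_derivative (\<lambda>h. G x \<bullet> h)) (at x)"
    and dG: "(G has_derivative blinfun_apply H) (at x0)"
    and min: "\<forall>y\<in>\<Omega>. u x0 \<le> u y"
  shows "0 \<le> blinfun_apply H b \<bullet> b"
proof (rule ccontr)
  assume neg: "\<not> ?thesis"
  then have "b \<noteq> 0" by auto
  have "G x0 = 0"
    using gradient_zero_at_min assms du by blast
  \<comment> \<open>the slope \<open>t \<mapsto> G (x0 + t b) \<bullet> b\<close> vanishes at \<open>0\<close> and has derivative \<open>H b \<bullet> b < 0\<close> there\<close>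
  obtain d where d: "0 < d" "\<And>t. 0 < t \<Longrightarrow> t < d \<Longrightarrow> G (x0 + t *\<^sub>R b) \<bullet> b < 0"
    using DERIV_neg_dec_right[OF has_real_derivative_inner_along_line[OF dG, of b]] neg \<open>G x0 = 0\<close>
    by auto
  obtain \<delta> where \<delta>: "0 < \<delta>" "ball x0 \<delta> \<subseteq> \<Omega>"
    using assms(1,2) open_contains_ball by blast
  define t0 where "t0 = min (d / 2) (\<delta> / (2 * norm b))"
  have t0: "0 < t0" "t0 < d"
    using d \<delta> \<open>b \<noteq> 0\<close> unfolding t0_def by auto
  have in_\<Omega>: "x0 + t *\<^sub>R b \<in> \<Omega>" if "0 \<le> t" "t \<le> t0" for t
  proof -
    have "t \<le> \<delta> / (2 * norm b)" using that unfolding t0_def by simp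
    then have "t * norm b \<le> \<delta> / (2 * norm b) * norm b" by (rule mult_right_mono) simp
    then have "norm (t *\<^sub>R b) \<le> \<delta> / (2 * norm b) * norm b" using that(1) by simp
    also have "\<dots> < \<delta>" using \<delta> \<open>b \<noteq> 0\<close> by simp
    finally show ?thesis using \<delta>(2) by (auto simp: dist_norm)
  qed
  have "((\<lambda>t. u (x0 + t *\<^sub>R b)) has_real_derivative (G (x0 + t *\<^sub>R b) \<bullet> b)) (at t)"
    if "0 \<le> t" "t \<le> t0" for t
    using du in_\<Omega>[OF that] by (intro has_real_derivative_along_line) simp
  from MVT2[OF \<open>0 < t0\<close> this]
  obtain z where z: "0 < z" "z < t0" "u (x0 + t0 *\<^sub>R b) - u x0 = t0 * (G (x0 + z *\<^sub>R b) \<bullet> b)"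
    by auto
  moreover have "t0 * (G (x0 + z *\<^sub>R b) \<bullet> b) < 0"
    using d(2)[of z] z t0 by (simp add: mult_pos_neg)
  moreover have "u x0 \<le> u (x0 + t0 *\<^sub>R b)"
    using min in_\<Omega>[of t0] t0 by simp
  ultimately show False by simp
qed

lemma laplacian_nonneg_at_min:
  fixes u :: "'a::euclidean_space \<Rightarrow> real" and G :: "'a \<Rightarrow> 'a"
  assumes "open \<Omega>" "x0 \<in> \<Omega>"
    and du: "\<forall>x\<in>\<Omega>. (u has_derivative (\<lambda>h. G x \<bullet> h)) (at x)"
    and dG: "(G has_derivative blinfun_apply H) (at x0)"
    and min: "\<forall>y\<in>\<Omega>. u x0 \<le> u y"
  shows "0 \<le> laplacian u x0"
proof -
  have "(grad u has_derivative blinfun_apply H) (at x0)"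
    using dG assms(1,2) by (rule has_derivative_transform_within_open) (metis du grad_eqI)
  then have "frechet_derivative (grad u) (at x0) = blinfun_apply H"
    by (metis frechet_derivative_at)
  then show ?thesis
    unfolding laplacian_def by (simp add: sum_nonneg hessian_nonneg_at_min[OF assms])
qed

lemma has_derivative_linear_growth:
  fixes G :: "'a::real_normed_vector \<Rightarrow> 'b::real_normed_vector"
  assumes "(G has_derivative blinfun_apply H) (at x0)" "G x0 = 0"
  obtains d where "0 < d" "\<And>z. norm (z - x0) < d \<Longrightarrow> norm (G z) \<le> (norm H + 1) * norm (z - x0)"
proof -
  obtain d where d: "0 < d"
    "\<And>z. norm (z - x0) < d \<Longrightarrow> norm (G z - G x0 - blinfun_apply H (z - x0)) \<le> 1 * norm (z - x0)"
    using assms(1) unfolding has_derivative_at_alt by (meson zero_less_one)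
  have "norm (G z) \<le> (norm H + 1) * norm (z - x0)" if "norm (z - x0) < d" for z
  proof -
    have "norm (G z) \<le> norm (G z - blinfun_apply H (z - x0)) + norm (blinfun_apply H (z - x0))"
      by (metis norm_triangle_ineq diff_add_cancel)
    then show ?thesis
      using d(2)[OF that] assms(2) norm_blinfun[of H "z - x0"] by (simp add: algebra_simps)
  qed
  then show ?thesis using that d(1) by blast
qed

lemma quadratic_bound_at_critical_point:
  fixes u :: "'a::euclidean_space \<Rightarrow> real" and G :: "'a \<Rightarrow> 'a"
  assumes "open \<Omega>" "x0 \<in> \<Omega>"
    and du: "\<forall>x\<in>\<Omega>. (u has_derivative (\<lambda>h. G x \<bullet> h)) (at x)"
    and dG: "(G has_derivative blinfun_apply H) (at x0)"
    and G0: "G x0 = 0"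
  obtains r K where "0 < r" "\<forall>y\<in>ball x0 r. \<bar>u y - u x0\<bar> \<le> K * norm (y - x0) ^ 2"
proof -
  define K where "K = norm H + 1"
  obtain d where d: "0 < d" "\<And>z. norm (z - x0) < d \<Longrightarrow> norm (G z) \<le> K * norm (z - x0)"
    using has_derivative_linear_growth[OF dG G0] unfolding K_def by blast
  obtain \<delta> where \<delta>: "\<delta> > 0" "ball x0 \<delta> \<subseteq> \<Omega>"
    using assms(1,2) open_contains_ball by blast
  define r where "r = min d \<delta>"
  have "\<bar>u y - u x0\<bar> \<le> K * norm (y - x0) ^ 2" if "y \<in> ball x0 r" for y
  proof -
    define \<rho> where "\<rho> = norm (y - x0)"
    have "norm (u y - u x0) \<le> (K * \<rho>) * norm (y - x0)"
    proof (rule differentiable_bound[of "cball x0 \<rho>"])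
      fix z assume "z \<in> cball x0 \<rho>"
      then have z: "norm (z - x0) \<le> \<rho>" "\<rho> < r"
        using that unfolding \<rho>_def by (auto simp: dist_norm norm_minus_commute)
      then have "z \<in> \<Omega>" using \<delta> unfolding r_def by (auto simp: dist_norm norm_minus_commute)
      then show "(u has_derivative (\<lambda>h. G z \<bullet> h)) (at z within cball x0 \<rho>)"
        using du by (simp add: has_derivative_at_withinI)
      have "norm (G z) \<le> K * \<rho>"
        using d(2)[of z] z unfolding r_def K_def
        by (smt (verit) mult_left_mono norm_ge_zero)
      then show "onorm (\<lambda>h. G z \<bullet> h) \<le> K * \<rho>"
        by (intro onorm_le) (metis Cauchy_Schwarz_ineq2 mult_right_mono norm_ge_zero order_trans real_norm_def)
    qed (auto simp: \<rho>_def dist_norm norm_minus_commute)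
    then show ?thesis unfolding \<rho>_def by (simp add: power2_eq_square mult.assoc)
  qed
  moreover have "0 < r" using d \<delta> unfolding r_def by simp
  ultimately show ?thesis using that by blast
qed

subsection \<open>The fractional Laplacian at a minimum\<close>

lemma tendsto_integral_compl_ball:
  fixes g :: "'a::euclidean_space \<Rightarrow> real"
  assumes "integrable lebesgue g"
  shows "((\<lambda>\<epsilon>. \<integral>y \<in> - ball x \<epsilon>. g y \<partial>lebesgue) \<longlongrightarrow> integral\<^sup>L lebesgue g) (at_right 0)"
  unfolding filterlim_at_right_to_top set_lebesgue_integral_def
proof (rule integral_dominated_convergence_at_top[where w="\<lambda>y. norm (g y)"])
  show "(\<lambda>y. indicator (- ball x (inverse t)) y *\<^sub>R g y) \<in> borel_measurable lebesgue" for t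
    using assms by (intro borel_measurable_scaleR borel_measurable_indicator) auto
  show "AE y in lebesgue. ((\<lambda>t. indicator (- ball x (inverse t)) y *\<^sub>R g y) \<longlongrightarrow> g y) at_top"
    using AE_completion[OF AE_lborel_singleton[of x]]
  proof eventually_elim
    case (elim y)
    then have "0 < dist x y" by simp
    have "\<forall>\<^sub>F t in at_top. indicator (- ball x (inverse t)) y *\<^sub>R g y = g y"
      using eventually_gt_at_top[of "inverse (dist x y)"]
    proof eventually_elim
      case (elim t)
      then have "inverse t < dist x y"
        using \<open>0 < dist x y\<close> by (metis inverse_inverse_eq inverse_less_imp_less inverse_positive_iff_positive)
      then show ?case by (simp add: indicator_def)
    qed
    then show ?case by (rule tendsto_eventually)
  qed
qed (use assms in \<open>auto simp: indicator_def\<close>)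

lemma integral_pos_of_pos_on_open:
  fixes g :: "'a::euclidean_space \<Rightarrow> real"
  assumes "integrable lebesgue g" "\<And>y. 0 \<le> g y"
    and "open S" "y0 \<in> S" "\<And>y. y \<in> S \<Longrightarrow> 0 < g y"
  shows "0 < integral\<^sup>L lebesgue g"
proof -
  obtain \<epsilon> where \<epsilon>: "0 < \<epsilon>" "ball y0 \<epsilon> \<subseteq> S"
    using assms(3,4) open_contains_ball by blast
  have "integral\<^sup>L lebesgue g \<noteq> 0"
  proof
    assume "integral\<^sup>L lebesgue g = 0"
    then have "AE y in lebesgue. g y = 0"
      using integral_nonneg_eq_0_iff_AE[of lebesgue g] assms(1,2) by simp
    then have "AE y in lebesgue. y \<notin> ball y0 \<epsilon>"
      by eventually_elim (use \<epsilon> assms(5) in force)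
    then have "emeasure lebesgue (ball y0 \<epsilon>) = 0"
      by (subst (asm) AE_iff_measurable[of "ball y0 \<epsilon>"]) auto
    moreover have "0 < emeasure lebesgue (ball y0 \<epsilon>)"
      using content_ball_pos[OF \<open>0 < \<epsilon>\<close>, of y0] emeasure_eq_measure2[OF lmeasurable_ball[of y0 \<epsilon>]]
      by simp
    ultimately show False by simp
  qed
  moreover have "0 \<le> integral\<^sup>L lebesgue g"
    using assms(2) by simp
  ultimately show ?thesis by linarith
qed

lemma frac_const_pos:
  assumes "0 < s" "s < 1"
  shows "0 < frac_const N s"
  unfolding frac_const_def using assms by (intro divide_pos_pos mult_pos_pos) auto

lemma frac_lap_eq_integral:
  fixes u :: "'a::euclidean_space \<Rightarrow> real" and s :: real
  assumes "integrable lebesgue (\<lambda>y. (u x - u y) / norm (x - y) powr (DIM('a) + 2 * s))"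
  shows "frac_lap s u x = frac_const DIM('a) s * (\<integral>y. (u x - u y) / norm (x - y) powr (DIM('a) + 2 * s) \<partial>lebesgue)"
  unfolding frac_lap_def using tendsto_Lim[OF trivial_limit_at_right_real tendsto_integral_compl_ball[OF assms]]
  by simp

lemma frac_lap_neg_at_min:
  fixes u :: "'a::euclidean_space \<Rightarrow> real" and s :: real
  assumes "continuous_on UNIV u" "0 < s" "s < 1"
    and "integrable lebesgue (\<lambda>y. (u x - u y) / norm (x - y) powr (DIM('a) + 2 * s))"
    and "\<forall>y. u x \<le> u y" "u x < u y1"
  shows "frac_lap s u x < 0"
proof -
  let ?g = "\<lambda>y. (u y - u x) / norm (x - y) powr (DIM('a) + 2 * s)"
  have "0 < integral\<^sup>L lebesgue ?g"
  proof (rule integral_pos_of_pos_on_open)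
    show "integrable lebesgue ?g"
      using integrable_minus[OF assms(4)] by (simp add: minus_divide_left)
    show "open {y. u x < u y}"
      using assms(1) by (intro open_Collect_less) auto
    show "0 \<le> ?g y" for y
      using assms(5) by simp
    show "0 < ?g y" if "y \<in> {y. u x < u y}" for y
      using that by (intro divide_pos_pos) auto
  qed (use assms(6) in simp)
  then show ?thesis
    unfolding frac_lap_eq_integral[OF assms(4)]
    using frac_const_pos[OF assms(2,3)] integral_minus[of lebesgue ?g]
    by (simp add: minus_divide_left mult_pos_neg)
qed

lemma ex_global_min_in_domain:
  fixes u :: "'a::euclidean_space \<Rightarrow> real"
  assumes "bounded \<Omega>" "continuous_on UNIV u" "\<forall>x\<in>- \<Omega>. 0 \<le> u x"
    and "x1 \<in> \<Omega>" "u x1 \<le> 0" "u y1 \<noteq> 0"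
  obtains x0 z where "x0 \<in> \<Omega>" "\<forall>y. u x0 \<le> u y" "u x0 < u z"
proof -
  have "compact (closure \<Omega>)" "closure \<Omega> \<noteq> {}" "continuous_on (closure \<Omega>) u"
    using assms(1,2,4) closure_subset by (auto simp: compact_closure intro: continuous_on_subset)
  then obtain xm where xm: "xm \<in> closure \<Omega>" "\<forall>y\<in>closure \<Omega>. u xm \<le> u y"
    using continuous_attains_inf by blast
  have "u xm \<le> u x1"
    using xm(2) assms(4) closure_subset by blast
  have global: "u xm \<le> u y" for y
  proof (cases "y \<in> closure \<Omega>")
    case False
    then have "0 \<le> u y" using assms(3) closure_subset by blast
    then show ?thesis using \<open>u xm \<le> u x1\<close> assms(5) by linarith
  qed (use xm in blast)
  obtain x0 where x0: "x0 \<in> \<Omega>" "u x0 \<le> 0" "\<forall>y. u x0 \<le> u y"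
  proof (cases "xm \<in> \<Omega>")
    case True
    then show ?thesis using that global \<open>u xm \<le> u x1\<close> assms(5) by fastforce
  next
    case False
    then have "u x1 \<le> u xm" using assms(3,5) by force
    then show ?thesis using global assms(4,5) by (intro that[of x1]) (auto intro: order_trans)
  qed
  obtain w where "w \<notin> \<Omega>"
    using assms(1) by (metis UNIV_I not_bounded_UNIV subsetI subset_antisym)
  then have "u x0 < u y1 \<or> u x0 < u w"
    using assms(3,6) x0(2,3) by (metis ComplI order.antisym not_less)
  then show ?thesis using that x0(1,3) by blast
qed

theorem theorem3p1:
  fixes \<Omega> :: "'a::euclidean_space set" and q :: "'a \<Rightarrow> 'a" and s :: real and u :: "'a \<Rightarrow> real"
  assumes "open \<Omega>" and "bounded \<Omega>"
    and "q \<in> borel_measurable (restrict_space lebesgue \<Omega>)"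
    and "\<exists>M. AE x in lebesgue. x \<in> \<Omega> \<longrightarrow> norm (q x) \<le> M"
    and "0 < s" and "s < 1"
    and "u \<in> L1s s" and "C2_on \<Omega> u" and "continuous_on UNIV u"
    and "\<forall>x\<in>\<Omega>. - laplacian u x + frac_lap s u x + q x \<bullet> grad u x \<ge> 0"
    and "\<forall>x\<in>- \<Omega>. u x \<ge> 0"
  shows "(\<forall>x\<in>\<Omega>. u x > 0) \<or> (\<forall>x. u x = 0)"
proof (rule ccontr)
  assume "\<not> ?thesis"
  then obtain x1 y1 where "x1 \<in> \<Omega>" "u x1 \<le> 0" "u y1 \<noteq> 0"
    by (auto simp: not_less)
  then obtain x0 z where x0: "x0 \<in> \<Omega>" "\<forall>y. u x0 \<le> u y" and "u x0 < u z"
    using ex_global_min_in_domain assms(2,9,11) by metis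
  obtain G H where du: "\<forall>x\<in>\<Omega>. (u has_derivative (\<lambda>h. G x \<bullet> h)) (at x)"
    and dG: "\<forall>x\<in>\<Omega>. (G has_derivative blinfun_apply (H x)) (at x)"
    using assms(8) unfolding C2_on_def by blast
  have "G x0 = 0"
    using gradient_zero_at_min assms(1) x0 du by blast
  then have "grad u x0 = 0"
    using grad_eqI du x0(1) by metis
  moreover have "0 \<le> laplacian u x0"
    using laplacian_nonneg_at_min assms(1) x0 du dG by blast
  moreover obtain r K where "0 < r" "\<forall>y\<in>ball x0 r. \<bar>u y - u x0\<bar> \<le> K * norm (y - x0) ^ 2"
    using quadratic_bound_at_critical_point assms(1) x0(1) du dG \<open>G x0 = 0\<close> by blast
  then have "integrable lebesgue (\<lambda>y. (u x0 - u y) / norm (x0 - y) powr (DIM('a) + 2 * s))"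
    by (intro integrable_frac_lap_kernel assms(5-7))
  then have "frac_lap s u x0 < 0"
    using frac_lap_neg_at_min assms(5,6,9) x0(2) \<open>u x0 < u z\<close> by blast
  ultimately show False
    using assms(10) x0(1) by fastforce
qed

end
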